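(* Let $k\ge1$ and $c\in\mathcal{S}_k^\alpha\setminus\{\mathbf{0}\}$. Then $w_H(c)=q^{sk}-q^{\nu(c)+s(k-1)}$.
   Context: Let $R$ be a finite commutative chain ring with maximal ideal $\langle\gamma\rangle$, nilpotency index $s$ and residue field $R/\langle\gamma\rangle\cong\mathbb{F}_q$. Fix coset representatives $T=\{e_0,\dots,e_{q-1}\}$ with $e_0=0,e_1=1$, ordered $e_0<\dots<e_{q-1}$; each $r\in R$ is uniquely $\sum_{i=0}^{s-1}r_i\gamma^i$, $r_i\in T$; order $R$ by $x>y$ iff $x_i>y_i$ in $T$ for the largest $i$ with $x_i\neq y_i$; list $R=\{\rho_0,\dots,\rho_{q^s-1}\}$ increasingly. $\mathbf{a}^{(m)}$ is the constant vector of length $m$. Define $G_1^\alpha=(\rho_0\ \cdots\ \rho_{q^s-1})$ and, for $k>1$, $G_k^\alpha$ as the $k\times q^{sk}$ matrix of $q^s$ column blocks, the $j$-th having first row $\boldsymbol{\rho_j}^{(q^{s(k-1)})}$ and $G_{k-1}^\alpha$ below. $\mathcal{S}_k^\alpha$ is the $R$-submodule of $R^{q^{sk}}$ generated by the rows of $G_k^\alpha$. $w_H$ is the Hamming weight (number of nonzero coordinates). Valuation: for $x\in R\setminus\{0\}$, $\nu(x)$ is the largest $m$ with $x=\gamma^m\beta$, $\beta$ a unit; $\nu(0)=\infty$; for $x\in R^n$, $\nu(x)=\min_i\nu(x_i)$. *)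

theory Defs
  imports "HOL-Library.Extended_Nat"
begin

text \<open>Standing setup: R is the (finite, commutative) type 'a; g is the generator gamma of
the maximal ideal; s is the nilpotency index of g; e enumerates the coset representatives
T = {e 0, ..., e (q-1)} of R/<g> (ordered e 0 < e 1 < ... < e (q-1)), with e 0 = 0, e 1 = 1;
q is the size of the residue field.\<close>

definition chain_ring_setup :: "'a::{comm_ring_1,finite} \<Rightarrow> nat \<Rightarrow> nat \<Rightarrow> (nat \<Rightarrow> 'a) \<Rightarrow> bool" where
  "chain_ring_setup g s q e \<longleftrightarrow>
     s \<ge> 1 \<and> g ^ s = 0 \<and> g ^ (s - 1) \<noteq> 0 \<and>
     (\<forall>x. (\<not> x dvd 1) \<longleftrightarrow> g dvd x) \<and>
     inj_on e {..<q} \<and> e 0 = 0 \<and> e 1 = 1 \<and>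
     (\<forall>x. \<exists>!i. i < q \<and> g dvd (x - e i))"

definition digits :: "'a::comm_ring_1 \<Rightarrow> nat \<Rightarrow> nat \<Rightarrow> (nat \<Rightarrow> 'a) \<Rightarrow> 'a \<Rightarrow> 'a list" where
  "digits g s q e r = (THE ds. length ds = s \<and> set ds \<subseteq> e ` {..<q} \<and> r = (\<Sum>i<s. ds ! i * g ^ i))"

definition tidx :: "nat \<Rightarrow> (nat \<Rightarrow> 'a) \<Rightarrow> 'a \<Rightarrow> nat" where
  "tidx q e t = (THE j. j < q \<and> e j = t)"

definition ring_less :: "'a::comm_ring_1 \<Rightarrow> nat \<Rightarrow> nat \<Rightarrow> (nat \<Rightarrow> 'a) \<Rightarrow> 'a \<Rightarrow> 'a \<Rightarrow> bool" where
  "ring_less g s q e x y \<longleftrightarrow>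
     (\<exists>i<s. digits g s q e x ! i \<noteq> digits g s q e y ! i \<and>
        (\<forall>j. i < j \<and> j < s \<longrightarrow> digits g s q e x ! j = digits g s q e y ! j) \<and>
        tidx q e (digits g s q e x ! i) < tidx q e (digits g s q e y ! i))"

definition rho :: "'a::comm_ring_1 \<Rightarrow> nat \<Rightarrow> nat \<Rightarrow> (nat \<Rightarrow> 'a) \<Rightarrow> nat \<Rightarrow> 'a" where
  "rho g s q e j = (THE r. card {y. ring_less g s q e y r} = j)"

text \<open>Entry (row r, column c) of G_k (rows 0..k-1, columns 0..q^(sk)-1).
  G_(k+1): q^s column blocks of width (q^s)^k; block j has first row rho j and G_k below.\<close>
fun genmat :: "'a::comm_ring_1 \<Rightarrow> nat \<Rightarrow> nat \<Rightarrow> (nat \<Rightarrow> 'a) \<Rightarrow> nat \<Rightarrow> nat \<Rightarrow> nat \<Rightarrow> 'a" where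
  "genmat g s q e 0 r c = 0"
| "genmat g s q e (Suc k) r c =
     (if r = 0 then rho g s q e (c div (q ^ s) ^ k)
      else genmat g s q e k (r - 1) (c mod (q ^ s) ^ k))"

definition code :: "'a::comm_ring_1 \<Rightarrow> nat \<Rightarrow> nat \<Rightarrow> (nat \<Rightarrow> 'a) \<Rightarrow> nat \<Rightarrow> 'a list set" where
  "code g s q e k =
     {map (\<lambda>c. \<Sum>r<k. a r * genmat g s q e k r c) [0..<q ^ (s * k)] | a. True}"

definition hamming_weight :: "'a::zero list \<Rightarrow> nat" where
  "hamming_weight v = length (filter (\<lambda>x. x \<noteq> 0) v)"

definition val :: "'a::comm_ring_1 \<Rightarrow> 'a \<Rightarrow> enat" where
  "val g x = (if x = 0 then \<infinity> else enat (GREATEST m. \<exists>b. b dvd 1 \<and> x = g ^ m * b))"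

definition val_vec :: "'a::comm_ring_1 \<Rightarrow> 'a list \<Rightarrow> enat" where
  "val_vec g v = (INF x\<in>set v. val g x)"

end

theory Submission
  imports Defs "HOL-Library.Function_Algebras"
begin

text \<open>The first rows of the blocks of \<open>G\<^sub>k\<close> list \<open>R\<close> in increasing order, and that
  order is the numerical order of the base-\<open>q\<close> numeral formed by the positions of the
  \<open>\<gamma>\<close>-adic digits in \<open>T\<close>. So \<open>\<rho>\<close> is a bijection and the columns of \<open>G\<^sub>k\<close> run through \<open>R\<^sup>k\<close>
  exactly once: a codeword with coefficients \<open>a\<close> is the table of values of the linear form
  \<open>L x = \<Sum>\<^sub>r a\<^sub>r x\<^sub>r\<close> on \<open>R\<^sup>k\<close>. Since the ideals of \<open>R\<close> form the chain \<open>\<gamma>\<^sup>j R\<close>, each of index \<open>q\<close> in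
  the previous one, the image of \<open>L\<close> is \<open>\<gamma>\<^sup>m R\<close> with \<open>q ^ (s - m)\<close> elements, where \<open>m\<close> is the
  least valuation of the \<open>a\<^sub>r\<close>. Hence \<open>\<nu>(c) = m\<close>, the kernel of \<open>L\<close> has \<open>q ^ (m + s (k - 1))\<close>
  elements, and the weight counts the vectors outside it.\<close>

section \<open>Base-\<open>q\<close> numerals and the colexicographic order\<close>

definition colex_less :: "nat \<Rightarrow> (nat \<Rightarrow> nat) \<Rightarrow> (nat \<Rightarrow> nat) \<Rightarrow> bool" where
  "colex_less n f h \<longleftrightarrow> (\<exists>i<n. f i < h i \<and> (\<forall>j. i < j \<and> j < n \<longrightarrow> f j = h j))"

lemma colex_trichotomy: "(\<forall>i<n. f i = h i) \<or> colex_less n f h \<or> colex_less n h f"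
proof (cases "\<forall>i<n. f i = h i")
  case False
  let ?D = "{i. i < n \<and> f i \<noteq> h i}"
  have "finite ?D" "?D \<noteq> {}"
    using False by auto
  define i where "i = Max ?D"
  have "i < n \<and> f i \<noteq> h i"
    using Max_in[OF \<open>finite ?D\<close> \<open>?D \<noteq> {}\<close>] unfolding i_def by blast
  moreover have "f j = h j" if "i < j" "j < n" for j
    using that Max_ge[OF \<open>finite ?D\<close>, of j] unfolding i_def by fastforce
  ultimately show ?thesis
    unfolding colex_less_def by (metis linorder_neqE_nat)
qed simp

lemma base_expansion_less_pow:
  fixes f :: "nat \<Rightarrow> nat"
  shows "\<forall>i<n. f i < b \<Longrightarrow> (\<Sum>i<n. f i * b ^ i) < b ^ n"
proof (induction n)
  case (Suc n)
  then have "(\<Sum>i<Suc n. f i * b ^ i) < b ^ n + f n * b ^ n"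
    by simp
  also have "\<dots> = (f n + 1) * b ^ n"
    by simp
  also have "\<dots> \<le> b ^ Suc n"
    using Suc.prems mult_right_mono[of "f n + 1" b "b ^ n"] by (simp add: Suc_le_eq)
  finally show ?case .
qed simp

lemma colex_less_imp_base_expansion_less:
  fixes f h :: "nat \<Rightarrow> nat"
  assumes "\<forall>i<n. f i < b" "colex_less n f h"
  shows "(\<Sum>i<n. f i * b ^ i) < (\<Sum>i<n. h i * b ^ i)"
  using assms
proof (induction n)
  case (Suc n)
  then obtain i where i: "i < Suc n" "f i < h i" "\<forall>j. i < j \<and> j < Suc n \<longrightarrow> f j = h j"
    unfolding colex_less_def by blast
  show ?case
  proof (cases "i = n")
    case True
    have "(\<Sum>i<Suc n. f i * b ^ i) < b ^ n + f n * b ^ n"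
      using base_expansion_less_pow[of n f b] Suc.prems(1) by simp
    also have "\<dots> = (f n + 1) * b ^ n"
      by simp
    also have "\<dots> \<le> h n * b ^ n"
      using i True mult_right_mono[of "f n + 1" "h n" "b ^ n"] by simp
    also have "\<dots> \<le> (\<Sum>i<Suc n. h i * b ^ i)"
      by simp
    finally show ?thesis .
  next
    case False
    with i have "i < n" "f n = h n"
      by auto
    with i have "colex_less n f h"
      unfolding colex_less_def by auto
    with Suc \<open>f n = h n\<close> show ?thesis
      by simp
  qed
qed (simp add: colex_less_def)

lemma base_expansion_less_iff:
  fixes f h :: "nat \<Rightarrow> nat"
  assumes "\<forall>i<n. f i < b" "\<forall>i<n. h i < b"
  shows "(\<Sum>i<n. f i * b ^ i) < (\<Sum>i<n. h i * b ^ i) \<longleftrightarrow> colex_less n f h"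
proof
  assume less: "(\<Sum>i<n. f i * b ^ i) < (\<Sum>i<n. h i * b ^ i)"
  show "colex_less n f h"
  proof (rule ccontr)
    assume "\<not> colex_less n f h"
    then consider "\<forall>i<n. f i = h i" | "colex_less n h f"
      using colex_trichotomy by blast
    then show False
    proof cases
      case 1
      then have "(\<Sum>i<n. f i * b ^ i) = (\<Sum>i<n. h i * b ^ i)"
        by (intro sum.cong) auto
      with less show False
        by simp
    next
      case 2
      with less show False
        using colex_less_imp_base_expansion_less[OF assms(2)] by fastforce
    qed
  qed
qed (rule colex_less_imp_base_expansion_less[OF assms(1)])

lemma base_expansion_inj:
  fixes f h :: "nat \<Rightarrow> nat"
  assumes "\<forall>i<n. f i < b" "\<forall>i<n. h i < b"
    and "(\<Sum>i<n. f i * b ^ i) = (\<Sum>i<n. h i * b ^ i)"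
  shows "\<forall>i<n. f i = h i"
proof (rule ccontr)
  assume "\<not> (\<forall>i<n. f i = h i)"
  then have "colex_less n f h \<or> colex_less n h f"
    using colex_trichotomy by blast
  with assms(3) show False
    using colex_less_imp_base_expansion_less[OF assms(1)]
      colex_less_imp_base_expansion_less[OF assms(2)] by fastforce
qed

section \<open>The columns of the generator matrix\<close>

text \<open>\<open>R\<^sup>k\<close> is encoded as the functions \<open>nat \<Rightarrow> R\<close> vanishing from index \<open>k\<close> on,
  matching the row indexing of \<open>genmat\<close>.\<close>
definition supported_below :: "nat \<Rightarrow> (nat \<Rightarrow> 'a::zero) set" where
  "supported_below k = {x. \<forall>r\<ge>k. x r = 0}"

definition linear_form :: "(nat \<Rightarrow> 'a::comm_semiring_1) \<Rightarrow> nat \<Rightarrow> (nat \<Rightarrow> 'a) \<Rightarrow> 'a" where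
  "linear_form a k x = (\<Sum>r<k. a r * x r)"

lemma bij_betw_div_mod:
  fixes m n :: nat
  assumes "0 < n"
  shows "bij_betw (\<lambda>c. (c div n, c mod n)) {..<m * n} ({..<m} \<times> {..<n})"
proof (rule bij_betw_byWitness[where f' = "\<lambda>(a, b). a * n + b"])
  have "a * n + b < m * n" if "a < m" "b < n" for a b
  proof -
    have "a * n + b < (a + 1) * n"
      using that by simp
    also have "\<dots> \<le> m * n"
      using that by (intro mult_right_mono) auto
    finally show ?thesis .
  qed
  then show "(\<lambda>(a, b). a * n + b) ` ({..<m} \<times> {..<n}) \<subseteq> {..<m * n}"
    by auto
qed (use assms in \<open>auto simp: less_mult_imp_div_less\<close>)

lemma bij_betw_case_nat:
  "bij_betw (\<lambda>(a, x). case_nat a x) (UNIV \<times> supported_below k) (supported_below (Suc k))"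
  by (rule bij_betw_byWitness[where f' = "\<lambda>x. (x 0, \<lambda>r. x (Suc r))"])
    (auto simp: supported_below_def split: nat.split)

lemma genmat_Suc_column:
  "(\<lambda>r. genmat g s q e (Suc k) r c) =
     case_nat (rho g s q e (c div (q ^ s) ^ k)) (\<lambda>r. genmat g s q e k r (c mod (q ^ s) ^ k))"
  by (auto split: nat.split)

lemma bij_genmat_columns:
  assumes "bij_betw (rho g s q e) {..<q ^ s} UNIV"
  shows "bij_betw (\<lambda>c r. genmat g s q e k r c) {..<(q ^ s) ^ k} (supported_below k)"
proof (induction k)
  case 0
  have "supported_below 0 = {\<lambda>_. 0}"
    by (auto simp: supported_below_def)
  then show ?case
    by (auto simp: bij_betw_def lessThan_Suc)
next
  case (Suc k)
  have "0 < q ^ s"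
  proof (rule ccontr)
    assume "\<not> 0 < q ^ s"
    then have "rho g s q e ` {..<q ^ s} = {}"
      by (metis image_empty lessThan_0 not_gr0)
    with assms show False
      by (simp add: bij_betw_def)
  qed
  then have "0 < (q ^ s) ^ k"
    by simp
  then have "bij_betw (\<lambda>c. (c div (q ^ s) ^ k, c mod (q ^ s) ^ k)) {..<(q ^ s) ^ Suc k}
      ({..<q ^ s} \<times> {..<(q ^ s) ^ k})"
    using bij_betw_div_mod by simp
  from bij_betw_trans[OF bij_betw_trans[OF this bij_betw_map_prod[OF assms Suc.IH]] bij_betw_case_nat]
  show ?case
    by (simp add: comp_def genmat_Suc_column del: genmat.simps)
qed

lemma set_map_bij: "bij_betw B {..<n} V \<Longrightarrow> set (map (\<lambda>i. f (B i)) [0..<n]) = f ` V"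
  by (simp add: bij_betw_def image_image atLeast0LessThan flip: image_image)

lemma hamming_weight_map_bij:
  assumes "bij_betw B {..<n} V"
  shows "hamming_weight (map (\<lambda>i. f (B i)) [0..<n]) = card {x \<in> V. f x \<noteq> 0}"
proof -
  have "hamming_weight (map (\<lambda>i. f (B i)) [0..<n]) = card ({i. f (B i) \<noteq> 0} \<inter> {..<n})"
    unfolding hamming_weight_def filter_map length_map distinct_length_filter[OF distinct_upt]
    by (simp only: comp_def set_upt atLeast0LessThan)
  also have "\<dots> = card (B ` ({i. f (B i) \<noteq> 0} \<inter> {..<n}))"
    using assms by (simp add: card_image bij_betw_def inj_on_Int)
  also have "B ` ({i. f (B i) \<noteq> 0} \<inter> {..<n}) = {x \<in> V. f x \<noteq> 0}"
    using assms by (auto simp: bij_betw_def)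
  finally show ?thesis .
qed

text \<open>All fibres of an additive map on a finite group are cosets of its kernel.\<close>
lemma card_eq_card_image_mult_card_kernel:
  fixes L :: "'b::ab_group_add \<Rightarrow> 'c::ab_group_add"
  assumes "finite V"
    and add_closed: "\<And>x y. x \<in> V \<Longrightarrow> y \<in> V \<Longrightarrow> x + y \<in> V"
    and diff_closed: "\<And>x y. x \<in> V \<Longrightarrow> y \<in> V \<Longrightarrow> x - y \<in> V"
    and additive: "\<And>x y. L (x + y) = L x + L y"
  shows "card V = card (L ` V) * card {x \<in> V. L x = 0}"
proof -
  have card_fibre: "card {x \<in> V. L x = L x0} = card {x \<in> V. L x = 0}" if "x0 \<in> V" for x0
  proof -
    have L_diff: "L (x - x0) = L x - L x0" for x
      using additive[of "x - x0" x0] by (simp add: eq_diff_eq)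
    have "{x \<in> V. L x = L x0} = (\<lambda>z. z + x0) ` {x \<in> V. L x = 0}"
    proof (intro equalityI subsetI)
      fix x
      assume "x \<in> {x \<in> V. L x = L x0}"
      then have "x - x0 \<in> {x \<in> V. L x = 0}"
        using diff_closed that L_diff by simp
      then show "x \<in> (\<lambda>z. z + x0) ` {x \<in> V. L x = 0}"
        by (rule rev_image_eqI) simp
    next
      fix x
      assume "x \<in> (\<lambda>z. z + x0) ` {x \<in> V. L x = 0}"
      then show "x \<in> {x \<in> V. L x = L x0}"
        using add_closed that additive by auto
    qed
    then show ?thesis
      by (simp add: card_image inj_on_def)
  qed
  have "card V = (\<Sum>x\<in>V. 1)"
    by simp
  also have "\<dots> = (\<Sum>y\<in>L ` V. \<Sum>x\<in>{x \<in> V. L x = y}. 1)"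
    by (rule sum.image_gen[OF \<open>finite V\<close>])
  also have "\<dots> = (\<Sum>y\<in>L ` V. card {x \<in> V. L x = y})"
    by simp
  also have "\<dots> = (\<Sum>y\<in>L ` V. card {x \<in> V. L x = 0})"
    using card_fibre by (intro sum.cong) auto
  finally show ?thesis
    by simp
qed

section \<open>Ideals and valuation in a finite chain ring\<close>

lemma eq_0_if_mult_unit:
  fixes u x :: "'a::comm_semiring_1"
  assumes "u dvd 1" "x * u = 0"
  shows "x = 0"
proof -
  obtain v where "1 = u * v"
    using assms(1) by (rule dvdE)
  then have "x = x * u * v"
    by (simp add: mult.assoc)
  with assms(2) show ?thesis
    by simp
qed

locale chain_ring =
  fixes g :: "'a::{comm_ring_1,finite}" and s q :: nat and e :: "nat \<Rightarrow> 'a"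
  assumes chain_ring: "chain_ring_setup g s q e"
begin

lemma pow_s_eq_0: "g ^ s = 0" and pow_pred_s_neq_0: "g ^ (s - 1) \<noteq> 0"
  and nonunit_iff_dvd: "\<And>x. \<not> x dvd 1 \<longleftrightarrow> g dvd x"
  and inj_e: "inj_on e {..<q}" and e_0: "e 0 = 0"
  and ex1_rep: "\<And>x. \<exists>!i. i < q \<and> g dvd (x - e i)"
  using chain_ring unfolding chain_ring_setup_def by auto

lemma q_pos: "q > 0"
  using ex1_rep[of 0] by auto

lemma pow_neq_0:
  assumes "j < s"
  shows "g ^ j \<noteq> 0"
proof
  assume "g ^ j = 0"
  moreover have "g ^ j dvd g ^ (s - 1)"
    using assms by (simp add: le_imp_power_dvd)
  ultimately show False
    using pow_pred_s_neq_0 by simp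
qed

lemma pow_eq_0: "s \<le> n \<Longrightarrow> g ^ n = 0"
  using pow_s_eq_0 by (metis le_add_diff_inverse mult_zero_left power_add)

lemma unit_diff_pow_mult: "u dvd 1 \<Longrightarrow> 1 \<le> d \<Longrightarrow> (u - g ^ d * v) dvd 1"
proof (rule ccontr)
  assume "u dvd 1" "1 \<le> d" "\<not> (u - g ^ d * v) dvd 1"
  then have "g dvd u - g ^ d * v" "g dvd g ^ d * v"
    using nonunit_iff_dvd by (auto simp: dvd_power dvd_mult2)
  then have "g dvd 1"
    using \<open>u dvd 1\<close> by (metis diff_add_cancel dvd_add dvd_trans)
  then show False
    using nonunit_iff_dvd[of g] by simp
qed

definition T :: "'a set" where "T = e ` {..<q}"

lemma card_T: "card T = q"
  unfolding T_def using card_image[OF inj_e] by simp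

lemma zero_in_T: "0 \<in> T"
  using e_0 q_pos unfolding T_def by force

lemma ex_rep: "\<exists>t\<in>T. \<exists>w. x = t + g * w"
proof -
  obtain i where "i < q" "g dvd x - e i"
    using ex1_rep by blast
  then obtain w where "x = e i + g * w"
    by (metis add.commute diff_add_cancel dvdE)
  with \<open>i < q\<close> show ?thesis
    unfolding T_def by blast
qed

lemma unit_diff_rep:
  assumes "t \<in> T" "t' \<in> T" "t \<noteq> t'"
  shows "(t - t' + g * w) dvd 1"
proof (rule ccontr)
  assume "\<not> (t - t' + g * w) dvd 1"
  then have "g dvd t - t'"
    using nonunit_iff_dvd by (metis add_diff_cancel_right' dvd_diff dvd_triv_left)
  moreover obtain i i' where "i < q" "i' < q" "t = e i" "t' = e i'"
    using assms(1,2) unfolding T_def by blast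
  ultimately have "i = i'"
    using ex1_rep[of t] by auto
  with assms(3) \<open>t = e i\<close> \<open>t' = e i'\<close> show False
    by simp
qed

lemma card_ideal_step:
  assumes "j < s"
  shows "card {x. g ^ j dvd x} = q * card {y. g ^ Suc j dvd y}"
proof -
  let ?f = "\<lambda>(t, y). g ^ j * t + y"
  have "?f ` (T \<times> {y. g ^ Suc j dvd y}) = {x. g ^ j dvd x}"
  proof (intro equalityI subsetI)
    fix x assume "x \<in> ?f ` (T \<times> {y. g ^ Suc j dvd y})"
    then obtain t w where "x = g ^ j * t + g ^ Suc j * w"
      by auto
    then have "x = g ^ j * (t + g * w)"
      by (simp add: algebra_simps)
    then show "x \<in> {x. g ^ j dvd x}"
      by simp
  next
    fix x assume "x \<in> {x. g ^ j dvd x}"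
    then obtain r where "x = g ^ j * r"
      by (auto elim: dvdE)
    moreover obtain t w where "t \<in> T" "r = t + g * w"
      using ex_rep by blast
    ultimately have "x = ?f (t, g ^ Suc j * w)"
      by (simp add: algebra_simps)
    with \<open>t \<in> T\<close> show "x \<in> ?f ` (T \<times> {y. g ^ Suc j dvd y})"
      by force
  qed
  moreover have "inj_on ?f (T \<times> {y. g ^ Suc j dvd y})"
  proof (rule inj_onI)
    fix a b
    assume "a \<in> T \<times> {y. g ^ Suc j dvd y}" "b \<in> T \<times> {y. g ^ Suc j dvd y}"
      and eq_ab: "?f a = ?f b"
    then obtain t w t' w' where ab: "a = (t, g ^ Suc j * w)" "b = (t', g ^ Suc j * w')"
      and "t \<in> T" "t' \<in> T"
      by (auto elim!: dvdE)
    with eq_ab have eq: "g ^ j * t + g ^ Suc j * w = g ^ j * t' + g ^ Suc j * w'"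
      by simp
    have "g ^ j * (t - t' + g * (w - w')) = 0"
      using eq by (simp add: algebra_simps)
    then have "t = t'"
      using unit_diff_rep[OF \<open>t \<in> T\<close> \<open>t' \<in> T\<close>] eq_0_if_mult_unit pow_neq_0[OF assms]
      by (metis mult.commute)
    with eq ab show "a = b"
      by simp
  qed
  ultimately have "card {x. g ^ j dvd x} = card (T \<times> {y. g ^ Suc j dvd y})"
    using card_image by fastforce
  then show ?thesis
    by (simp add: card_cartesian_product card_T)
qed

lemma card_ideal: "j \<le> s \<Longrightarrow> card {x. g ^ j dvd x} = q ^ (s - j)"
proof (induction "s - j" arbitrary: j)
  case 0
  then have "{x. g ^ j dvd x} = {0}"
    using pow_eq_0 by simp
  with 0 show ?case
    by simp
next
  case (Suc n)
  then have "s - j = Suc (s - Suc j)"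
    by simp
  with Suc show ?case
    using card_ideal_step[of j] Suc.hyps(1)[of "Suc j"] by simp
qed

lemma card_UNIV_ring: "card (UNIV :: 'a set) = q ^ s"
  using card_ideal[of 0] by simp

lemma pow_mult_unit_le:
  assumes "g ^ n * u = g ^ n' * u'" "g ^ n * u \<noteq> 0" "u' dvd 1"
  shows "n \<le> n'"
proof (rule ccontr)
  assume "\<not> n \<le> n'"
  then have "g ^ n = g ^ n' * g ^ (n - n')"
    by (simp flip: power_add)
  with assms(1) have "g ^ n' * (u' - g ^ (n - n') * u) = 0"
    by (simp add: algebra_simps)
  moreover have "(u' - g ^ (n - n') * u) dvd 1"
    using unit_diff_pow_mult assms(3) \<open>\<not> n \<le> n'\<close> by simp
  ultimately have "g ^ n' = 0"
    using eq_0_if_mult_unit by blast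
  with assms(1,2) show False
    by simp
qed

lemma ex_pow_mult_unit:
  assumes "x \<noteq> 0"
  shows "\<exists>n u. n < s \<and> u dvd 1 \<and> x = g ^ n * u"
proof -
  have bounded: "n < s" if "g ^ n dvd x" for n
    using that assms pow_eq_0[of n] by (metis dvd_0_left_iff not_less)
  define n where "n = (GREATEST n. g ^ n dvd x)"
  have "g ^ n dvd x"
    unfolding n_def by (rule GreatestI_nat[of _ 0 s]) (auto intro: less_imp_le bounded)
  then obtain u where u: "x = g ^ n * u"
    by blast
  have "u dvd 1"
  proof (rule ccontr)
    assume "\<not> u dvd 1"
    then obtain v where "u = g * v"
      using nonunit_iff_dvd by blast
    with u have "x = g ^ Suc n * v"
      by (simp add: mult_ac)
    then have "g ^ Suc n dvd x"
      by simp
    then have "Suc n \<le> (GREATEST n. g ^ n dvd x)"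
      by (rule Greatest_le_nat[where b = s]) (auto intro: less_imp_le bounded)
    then show False
      by (simp flip: n_def)
  qed
  with u bounded[OF \<open>g ^ n dvd x\<close>] show ?thesis
    by blast
qed

lemma val_pow_mult_unit:
  assumes "n < s" "u dvd 1"
  shows "val g (g ^ n * u) = enat n"
proof -
  have "g ^ n * u \<noteq> 0"
    using assms pow_neq_0 eq_0_if_mult_unit by blast
  moreover have "(GREATEST m. \<exists>b. b dvd 1 \<and> g ^ n * u = g ^ m * b) = n"
  proof (rule Greatest_equality)
    show "\<exists>b. b dvd 1 \<and> g ^ n * u = g ^ n * b"
      using assms(2) by blast
  next
    fix m
    assume "\<exists>b. b dvd 1 \<and> g ^ n * u = g ^ m * b"
    then obtain b where "g ^ m * b = g ^ n * u"
      by metis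
    with \<open>g ^ n * u \<noteq> 0\<close> assms(2) show "m \<le> n"
      by (intro pow_mult_unit_le[of m b n u]) simp_all
  qed
  ultimately show ?thesis
    by (simp add: val_def)
qed

lemma val_eq_infinity_iff: "val g x = \<infinity> \<longleftrightarrow> x = 0"
  by (simp add: val_def)

lemma pow_dvd_iff_val: "g ^ j dvd x \<longleftrightarrow> enat j \<le> val g x"
proof (cases "x = 0")
  case False
  then obtain n u where nu: "n < s" "u dvd 1" "x = g ^ n * u"
    using ex_pow_mult_unit by blast
  then have val_x: "val g x = enat n"
    using val_pow_mult_unit by blast
  show ?thesis
  proof
    assume "g ^ j dvd x"
    then obtain y where y: "x = g ^ j * y"
      by blast
    with False have "y \<noteq> 0"
      by auto
    then obtain m v where "v dvd 1" "y = g ^ m * v"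
      using ex_pow_mult_unit by blast
    with y have x_eq: "x = g ^ (j + m) * v"
      by (simp add: power_add mult.assoc)
    with False have "j + m < s"
      using pow_eq_0[of "j + m"] by (cases "j + m < s") simp_all
    with x_eq \<open>v dvd 1\<close> have "val g x = enat (j + m)"
      using val_pow_mult_unit by blast
    then show "enat j \<le> val g x"
      by simp
  next
    assume "enat j \<le> val g x"
    with val_x have "n = j + (n - j)"
      by simp
    with nu(3) have "x = g ^ j * (g ^ (n - j) * u)"
      by (metis mult.assoc power_add)
    then show "g ^ j dvd x"
      by simp
  qed
qed (simp add: val_def)

lemma INF_val_ideal: "j < s \<Longrightarrow> (INF x\<in>{x. g ^ j dvd x}. val g x) = enat j"
  using pow_dvd_iff_val val_pow_mult_unit[of j 1]
  by (intro antisym INF_greatest INF_lower2[of "g ^ j"]) auto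

section \<open>Digit expansions and the order of \<open>R\<close>\<close>

lemma ex_expansion: "\<exists>d. (\<forall>i. d i \<in> T) \<and> (\<exists>w. r = (\<Sum>i<n. d i * g ^ i) + g ^ n * w)"
proof (induction n)
  case 0
  show ?case
    using zero_in_T by auto
next
  case (Suc n)
  then obtain d w where d: "\<forall>i. d i \<in> T" "r = (\<Sum>i<n. d i * g ^ i) + g ^ n * w"
    by blast
  obtain t w' where "t \<in> T" "w = t + g * w'"
    using ex_rep by blast
  with d have "r = (\<Sum>i<Suc n. (d(n := t)) i * g ^ i) + g ^ Suc n * w'"
    by (simp add: algebra_simps)
  with d(1) \<open>t \<in> T\<close> show ?case
    by (metis fun_upd_apply)
qed

text \<open>Uniqueness of the expansion comes from counting: there are as many digit strings as
  ring elements.\<close>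
lemma bij_expansion:
  "bij_betw (\<lambda>ds. \<Sum>i<s. ds ! i * g ^ i) {ds. set ds \<subseteq> T \<and> length ds = s} UNIV"
proof -
  let ?D = "{ds. set ds \<subseteq> T \<and> length ds = s}"
  let ?x = "\<lambda>ds. \<Sum>i<s. ds ! i * g ^ i"
  have "r \<in> ?x ` ?D" for r
  proof -
    obtain d where "\<forall>i. d i \<in> T" "r = (\<Sum>i<s. d i * g ^ i)"
      using ex_expansion[of r s] pow_s_eq_0 by auto
    then have "map d [0..<s] \<in> ?D" "r = ?x (map d [0..<s])"
      by auto
    then show ?thesis
      by blast
  qed
  then have "?x ` ?D = UNIV"
    by blast
  moreover have "finite ?D" "card ?D = card (UNIV :: 'a set)"
    by (simp_all add: finite_lists_length_eq card_lists_length_eq card_T card_UNIV_ring)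
  ultimately show ?thesis
    unfolding bij_betw_def by (simp add: eq_card_imp_inj_on)
qed

lemma digits_spec:
  "length (digits g s q e r) = s \<and> set (digits g s q e r) \<subseteq> T \<and>
     r = (\<Sum>i<s. digits g s q e r ! i * g ^ i)"
  unfolding digits_def T_def[symmetric]
proof (rule theI')
  show "\<exists>!ds. length ds = s \<and> set ds \<subseteq> T \<and> r = (\<Sum>i<s. ds ! i * g ^ i)"
    using bij_expansion unfolding bij_betw_def inj_on_def by blast
qed

lemma digit_in_T: "i < s \<Longrightarrow> digits g s q e r ! i \<in> T"
  using digits_spec[of r] nth_mem[of i "digits g s q e r"] by auto

lemma tidx_e: "j < q \<Longrightarrow> tidx q e (e j) = j"
  unfolding tidx_def using inj_e by (auto dest: inj_onD)

lemma tidx_spec: "t \<in> T \<Longrightarrow> tidx q e t < q \<and> e (tidx q e t) = t"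
  unfolding T_def using tidx_e by auto

lemma inj_on_tidx: "inj_on (tidx q e) T"
  by (rule inj_on_inverseI[where g = e]) (use tidx_spec in blast)

definition digit_index :: "'a \<Rightarrow> nat \<Rightarrow> nat" where
  "digit_index r i = tidx q e (digits g s q e r ! i)"

lemma digit_index_less: "i < s \<Longrightarrow> digit_index r i < q"
  unfolding digit_index_def using tidx_spec digit_in_T by blast

lemma digit_index_eq_iff:
  "i < s \<Longrightarrow> digit_index x i = digit_index y i \<longleftrightarrow> digits g s q e x ! i = digits g s q e y ! i"
  unfolding digit_index_def using inj_on_eq_iff[OF inj_on_tidx digit_in_T digit_in_T] .

definition rank :: "'a \<Rightarrow> nat" where
  "rank r = (\<Sum>i<s. digit_index r i * q ^ i)"

lemma ring_less_iff_colex_less: "ring_less g s q e x y \<longleftrightarrow> colex_less s (digit_index x) (digit_index y)"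
  unfolding ring_less_def colex_less_def digit_index_def[symmetric]
  by (auto simp flip: digit_index_eq_iff)

lemma ring_less_iff_rank_less: "ring_less g s q e x y \<longleftrightarrow> rank x < rank y"
  unfolding ring_less_iff_colex_less rank_def
  by (rule base_expansion_less_iff[symmetric]) (simp_all add: digit_index_less)

lemma inj_rank: "inj rank"
proof (rule injI)
  fix x y
  assume "rank x = rank y"
  then have "\<forall>i<s. digit_index x i = digit_index y i"
    unfolding rank_def by (intro base_expansion_inj) (simp_all add: digit_index_less)
  then have "\<forall>i<s. digits g s q e x ! i = digits g s q e y ! i"
    by (simp add: digit_index_eq_iff)
  then have "digits g s q e x = digits g s q e y"
    using digits_spec[of x] digits_spec[of y] by (simp add: nth_equalityI)
  then show "x = y"
    using digits_spec[of x] digits_spec[of y] by metis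
qed

lemma bij_rank: "bij_betw rank UNIV {..<q ^ s}"
proof (rule bij_betw_imageI[OF inj_rank])
  have "rank ` UNIV \<subseteq> {..<q ^ s}"
    unfolding rank_def by (auto intro!: base_expansion_less_pow simp: digit_index_less)
  moreover have "card (rank ` UNIV) = card {..<q ^ s}"
    using card_image[OF inj_rank] card_UNIV_ring by simp
  ultimately show "rank ` UNIV = {..<q ^ s}"
    by (simp add: card_subset_eq)
qed

lemma card_ring_less: "card {y. ring_less g s q e y r} = rank r"
proof -
  have "{y. ring_less g s q e y r} = rank -` {..<rank r}"
    by (auto simp: ring_less_iff_rank_less)
  moreover have "rank r \<in> {..<q ^ s}"
    using bij_rank by (auto simp: bij_betw_def)
  then have "{..<rank r} \<subseteq> range rank"
    using bij_rank by (auto simp: bij_betw_def)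
  ultimately show ?thesis
    by (simp add: card_vimage_inj[OF inj_rank])
qed

lemma rho_rank: "rho g s q e (rank r) = r"
  unfolding rho_def using card_ring_less inj_rank by (auto dest: injD)

lemma bij_rho: "bij_betw (rho g s q e) {..<q ^ s} UNIV"
proof (rule bij_betw_byWitness[where f' = rank])
  show "\<forall>j\<in>{..<q ^ s}. rank (rho g s q e j) = j"
    using bij_rank rho_rank unfolding bij_betw_def by (metis imageE)
qed (use bij_rank rho_rank in \<open>auto simp: bij_betw_def\<close>)

section \<open>Weights of codewords\<close>

lemma image_linear_form:
  assumes "\<exists>r<k. a r \<noteq> 0"
  obtains m where "m < s" "linear_form a k ` supported_below k = {y. g ^ m dvd y}"
proof -
  obtain r0 where "r0 < k" and r0_min: "\<And>r. r < k \<Longrightarrow> val g (a r0) \<le> val g (a r)"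
    using ex_is_arg_min_if_finite[of "{..<k}" "\<lambda>r. val g (a r)"] assms
    by (auto simp: is_arg_min_linorder)
  have "a r0 \<noteq> 0"
  proof
    assume "a r0 = 0"
    then have "val g (a r0) = \<infinity>"
      by (simp add: val_eq_infinity_iff)
    obtain r1 where "r1 < k" "a r1 \<noteq> 0"
      using assms by blast
    with r0_min[OF \<open>r1 < k\<close>] \<open>val g (a r0) = \<infinity>\<close> show False
      by (simp add: val_eq_infinity_iff)
  qed
  then obtain m u where "m < s" "u dvd 1" and a_r0: "a r0 = g ^ m * u"
    using ex_pow_mult_unit by blast
  then have "val g (a r0) = enat m"
    using val_pow_mult_unit by simp
  then have dvd_a: "g ^ m dvd a r" if "r < k" for r
    using r0_min[OF that] by (simp add: pow_dvd_iff_val)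
  have "linear_form a k ` supported_below k = {y. g ^ m dvd y}"
  proof (intro equalityI subsetI)
    fix y
    assume "y \<in> linear_form a k ` supported_below k"
    then obtain x where "y = linear_form a k x"
      by blast
    moreover have "g ^ m dvd linear_form a k x"
      unfolding linear_form_def by (rule dvd_sum) (simp add: dvd_a dvd_mult2)
    ultimately show "y \<in> {y. g ^ m dvd y}"
      by simp
  next
    fix y
    assume "y \<in> {y. g ^ m dvd y}"
    then obtain t where t: "y = g ^ m * t"
      by (auto elim: dvdE)
    obtain v where v: "1 = u * v"
      using \<open>u dvd 1\<close> by (rule dvdE)
    define x where "x r = (if r = r0 then v * t else 0)" for r
    have "x \<in> supported_below k"
      using \<open>r0 < k\<close> by (simp add: supported_below_def x_def)
    have "linear_form a k x = a r0 * (v * t)"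
      using \<open>r0 < k\<close> by (simp add: linear_form_def x_def if_distrib cong: if_cong)
    also have "\<dots> = g ^ m * (u * v) * t"
      by (simp add: a_r0 mult_ac)
    also have "\<dots> = y"
      by (simp add: t flip: v)
    finally show "y \<in> linear_form a k ` supported_below k"
      using \<open>x \<in> supported_below k\<close> by (intro rev_image_eqI[of x]) simp_all
  qed
  with \<open>m < s\<close> show ?thesis
    using that by blast
qed

lemma card_supported_below: "card (supported_below k :: (nat \<Rightarrow> 'a) set) = q ^ (s * k)"
  using bij_betw_same_card[OF bij_genmat_columns[OF bij_rho, of k]] by (simp add: power_mult)

lemma card_nonzero_linear_form:
  assumes "1 \<le> k" "m < s" "linear_form a k ` supported_below k = {y. g ^ m dvd y}"
  shows "card {x \<in> supported_below k. linear_form a k x \<noteq> 0} = q ^ (s * k) - q ^ (m + s * (k - 1))"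
proof -
  let ?V = "supported_below k :: (nat \<Rightarrow> 'a) set"
  let ?K = "{x \<in> ?V. linear_form a k x = 0}"
  have "finite ?V"
    using card_supported_below q_pos card_ge_0_finite by (metis zero_less_power)
  have "q ^ (s - m) * card ?K = q ^ (s - m) * q ^ (m + s * (k - 1))"
  proof -
    have "q ^ (s - m) * card ?K = q ^ (s * k)"
      using card_eq_card_image_mult_card_kernel[OF \<open>finite ?V\<close>, of "linear_form a k"]
        assms(2,3) card_supported_below card_ideal
      by (simp add: supported_below_def linear_form_def sum.distrib distrib_left)
    also have "\<dots> = q ^ (s - m + (m + s * (k - 1)))"
      using assms(1,2) by (cases k) (auto simp: algebra_simps)
    finally show ?thesis
      by (simp add: power_add)
  qed
  then have "card ?K = q ^ (m + s * (k - 1))"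
    using q_pos by simp
  moreover have "{x \<in> ?V. linear_form a k x \<noteq> 0} = ?V - ?K"
    by blast
  ultimately show ?thesis
    using card_supported_below \<open>finite ?V\<close> by (simp add: card_Diff_subset)
qed

end

theorem corollary3p10:
  fixes g :: "'a::{comm_ring_1,finite}" and s q k :: nat and e :: "nat \<Rightarrow> 'a"
    and c :: "'a list"
  assumes "chain_ring_setup g s q e"
    and "k \<ge> 1"
    and "c \<in> code g s q e k"
    and "c \<noteq> replicate (q ^ (s * k)) 0"
  shows "hamming_weight c = q ^ (s * k) - q ^ (the_enat (val_vec g c) + s * (k - 1))"
proof -
  interpret chain_ring g s q e
    by (rule chain_ring.intro) fact
  let ?column = "\<lambda>i r. genmat g s q e k r i"
  obtain a where c: "c = map (\<lambda>i. linear_form a k (?column i)) [0..<q ^ (s * k)]"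
    using assms(3) unfolding code_def linear_form_def by blast
  have columns: "bij_betw ?column {..<q ^ (s * k)} (supported_below k)"
    using bij_genmat_columns[OF bij_rho] by (simp add: power_mult)
  have "\<exists>r<k. a r \<noteq> 0"
  proof (rule ccontr)
    assume "\<not> (\<exists>r<k. a r \<noteq> 0)"
    with c have "c = map (\<lambda>_. 0) [0..<q ^ (s * k)]"
      by (simp add: linear_form_def)
    with assms(4) show False
      by (simp add: map_replicate_const)
  qed
  then obtain m where "m < s" and image: "linear_form a k ` supported_below k = {y. g ^ m dvd y}"
    using image_linear_form by blast
  have "set c = {y. g ^ m dvd y}"
    using set_map_bij[OF columns, of "linear_form a k"] c image by simp
  then have "val_vec g c = enat m"
    using INF_val_ideal[OF \<open>m < s\<close>] by (simp add: val_vec_def)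
  moreover have "hamming_weight c = card {x \<in> supported_below k. linear_form a k x \<noteq> 0}"
    using hamming_weight_map_bij[OF columns] c by simp
  ultimately show ?thesis
    using card_nonzero_linear_form[OF assms(2) \<open>m < s\<close> image] by simp
qed

end
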